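(* Let $R=(r_{st})$ be an $n\times n$ matrix over the complex numbers ($n\ge 2$). For $1\le i,j\le n$ let $R_{ij}$ be the matrix obtained from $R$ by replacing the $(i,j)$ entry by $0$ (all other entries unchanged). Let $l$ be the number of nonzero entries of $R$. Then $$(l-n)\,d_2(R)=\sum_{(i,j)\in I} d_2(R_{ij}),$$ where $I=\{(i,j): r_{ij}\ne 0,\ 1\le i,j\le n\}$.
   Context: For an $n\times n$ matrix $M=(m_{ij})$ ($n\ge 2$), the second immanant is $d_2(M)=\sum_{\sigma\in S_n}\chi_2(\sigma)\prod_{s=1}^n m_{s\sigma(s)}$, where $\chi_2$ is the irreducible character of the symmetric group $S_n$ corresponding to the partition $(2,1^{n-2})$. *)

theory Defs
  imports "HOL-Analysis.Analysis"
begin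

text \<open>Irreducible character of S_n for the partition (2,1^(n-2)), n = CARD('n):
  it is the sign character times the standard character (fixed points - 1).\<close>
definition chi2 :: "('n::finite \<Rightarrow> 'n) \<Rightarrow> int" where
  "chi2 \<sigma> = sign \<sigma> * (int (card {i. \<sigma> i = i}) - 1)"

definition d2 :: "complex^'n^'n \<Rightarrow> complex" where
  "d2 M = (\<Sum>\<sigma>\<in>{\<sigma>. \<sigma> permutes (UNIV :: 'n::finite set)}.
             of_int (chi2 \<sigma>) * (\<Prod>s\<in>UNIV. M $ s $ \<sigma> s))"

definition zero_entry :: "'a::zero^'n^'m \<Rightarrow> 'm \<Rightarrow> 'n \<Rightarrow> 'a^'n^'m" where
  "zero_entry R i j = (\<chi> s t. if s = i \<and> t = j then 0 else R $ s $ t)"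

end

theory Submission
  imports Defs
begin

text \<open>Zeroing the entry \<open>(i, j)\<close> of \<open>R\<close> kills exactly the diagonal products of the permutations
  with \<open>\<sigma> i = j\<close>. If the diagonal product of \<open>\<sigma>\<close> is nonzero, the graph of \<open>\<sigma>\<close> consists of
  \<open>n\<close> of the \<open>l\<close> nonzero positions, so that product survives in exactly \<open>l - n\<close> of the matrices
  \<open>R\<^sub>i\<^sub>j\<close>. Summing over \<open>\<sigma>\<close> gives the identity for every weighting of the permutations, in
  particular for the character \<open>\<chi>\<^sub>2\<close>.\<close>

definition immanant :: "(('n::finite \<Rightarrow> 'n) \<Rightarrow> 'a) \<Rightarrow> 'a::comm_ring_1^'n^'n \<Rightarrow> 'a" where
  "immanant f M = (\<Sum>\<sigma>\<in>{\<sigma>. \<sigma> permutes (UNIV :: 'n set)}. f \<sigma> * (\<Prod>s\<in>UNIV. M $ s $ \<sigma> s))"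

lemma d2_eq_immanant: "d2 M = immanant (\<lambda>\<sigma>. of_int (chi2 \<sigma>)) M"
  unfolding d2_def immanant_def ..

lemma prod_zero_entry:
  "(\<Prod>s\<in>UNIV. zero_entry R i j $ s $ \<sigma> s) =
     (if \<sigma> i = j then 0 else (\<Prod>s\<in>UNIV. R $ s $ \<sigma> s))"
  for R :: "'a::comm_semiring_1^'n::finite^'n"
proof (cases "\<sigma> i = j")
  case True
  then show ?thesis
    by (simp, intro prod_zero) (auto simp: zero_entry_def)
next
  case False
  then show ?thesis
    by (simp, intro prod.cong) (auto simp: zero_entry_def)
qed

lemma immanant_zero_entry:
  "immanant f (zero_entry R i j) =
     (\<Sum>\<sigma>\<in>{\<sigma>. \<sigma> permutes UNIV}. if \<sigma> i = j then 0 else f \<sigma> * (\<Prod>s\<in>UNIV. R $ s $ \<sigma> s))"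
  unfolding immanant_def prod_zero_entry by (rule sum.cong) auto

lemma sum_nonzero_entries_off_graph:
  fixes R :: "'a::comm_ring_1^'n::finite^'n" and \<sigma> :: "'n \<Rightarrow> 'n"
  defines "I \<equiv> {(i, j). R $ i $ j \<noteq> 0}" and "P \<equiv> \<Prod>s\<in>UNIV. R $ s $ \<sigma> s"
  shows "(\<Sum>(i, j)\<in>I. if \<sigma> i = j then 0 else P) = (of_nat (card I) - of_nat CARD('n)) * P"
proof (cases "P = 0")
  case True
  then show ?thesis
    by (simp only: True if_cancel case_prod_unfold sum.neutral_const mult_zero_right)
next
  case False
  let ?G = "range (\<lambda>i. (i, \<sigma> i))"
  have "finite I" by simp
  have graph_subset: "?G \<subseteq> I"
    using False unfolding I_def P_def by (auto intro: prod_zero)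
  have card_graph: "card ?G = CARD('n)"
    by (rule card_image) (auto simp: inj_on_def)
  have "(\<Sum>(i, j)\<in>I. if \<sigma> i = j then 0 else P) = (\<Sum>p\<in>I. if p \<in> ?G then 0 else P)"
    by (rule sum.cong) auto
  also have "\<dots> = (\<Sum>p\<in>I - ?G. P)"
    by (rule sum.mono_neutral_cong_right) (use \<open>finite I\<close> in auto)
  also have "\<dots> = of_nat (card I - card ?G) * P"
    using graph_subset \<open>finite I\<close> by (simp add: card_Diff_subset finite_subset)
  also have "\<dots> = (of_nat (card I) - of_nat CARD('n)) * P"
    using card_graph card_mono[OF \<open>finite I\<close> graph_subset] by (simp add: of_nat_diff)
  finally show ?thesis .
qed

theorem immanant_sum_zero_entries:
  fixes R :: "'a::comm_ring_1^'n::finite^'n"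
  defines "I \<equiv> {(i, j). R $ i $ j \<noteq> 0}"
  shows "(of_nat (card I) - of_nat CARD('n)) * immanant f R
           = (\<Sum>(i, j)\<in>I. immanant f (zero_entry R i j))"
proof -
  let ?S = "{\<sigma>. \<sigma> permutes (UNIV :: 'n set)}"
  let ?P = "\<lambda>\<sigma>. \<Prod>s\<in>UNIV. R $ s $ \<sigma> s"
  have "(\<Sum>(i, j)\<in>I. immanant f (zero_entry R i j)) =
      (\<Sum>\<sigma>\<in>?S. \<Sum>(i, j)\<in>I. if \<sigma> i = j then 0 else f \<sigma> * ?P \<sigma>)"
    unfolding immanant_zero_entry case_prod_unfold by (rule sum.swap)
  also have "\<dots> = (\<Sum>\<sigma>\<in>?S. f \<sigma> * (\<Sum>(i, j)\<in>I. if \<sigma> i = j then 0 else ?P \<sigma>))"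
    unfolding sum_distrib_left case_prod_unfold by (intro sum.cong refl) simp
  also have "\<dots> = (\<Sum>\<sigma>\<in>?S. f \<sigma> * ((of_nat (card I) - of_nat CARD('n)) * ?P \<sigma>))"
    unfolding I_def sum_nonzero_entries_off_graph ..
  also have "\<dots> = (of_nat (card I) - of_nat CARD('n)) * immanant f R"
    unfolding immanant_def by (simp add: sum_distrib_left mult_ac)
  finally show ?thesis ..
qed

theorem corollary3p4:
  fixes R :: "complex^'n^'n"
  assumes "CARD('n) \<ge> 2"
  shows "(of_nat (card {(i, j). R $ i $ j \<noteq> 0}) - of_nat CARD('n)) * d2 R
           = (\<Sum>(i, j)\<in>{(i, j). R $ i $ j \<noteq> 0}. d2 (zero_entry R i j))"
  unfolding d2_eq_immanant by (rule immanant_sum_zero_entries)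

end
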